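(* Let $R$ be a generalized p.q.-Baer $*$-ring and $x\in R$. Then there exist a central projection $e\in R$ and $n\in\mathbb N$ such that (1) $x^ne=x^n$, and (2) for every $y\in R$, $(xR)^ny=\{0\}$ if and only if $ey=0$.
   Context: A $*$-ring is a ring with an involution; a projection is $e$ with $e=e^*=e^2$; a central projection is a projection commuting with all elements. $r_R(S)=\{a\in R: sa=0\ \forall s\in S\}$. A $*$-ring $R$ is a generalized p.q.-Baer $*$-ring if for every $x\in R$ there are $n\in\mathbb N$ and a projection $e$ with $r_R((xR)^n)=eR$ (equivalently, for every principal ideal $I$, $r_R(I^n)=eR$ for some $n$ and projection $e$). *)

theory Defs
  imports Main
begin

definition star_ring :: "('a::ring_1 \<Rightarrow> 'a) \<Rightarrow> bool" where
  "star_ring invl \<longleftrightarrow>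
     (\<forall>a b. invl (a + b) = invl a + invl b) \<and>
     (\<forall>a b. invl (a * b) = invl b * invl a) \<and>
     (\<forall>a. invl (invl a) = a)"

definition projection :: "('a::ring_1 \<Rightarrow> 'a) \<Rightarrow> 'a \<Rightarrow> bool" where
  "projection invl e \<longleftrightarrow> e = invl e \<and> e = e * e"

definition central_projection :: "('a::ring_1 \<Rightarrow> 'a) \<Rightarrow> 'a \<Rightarrow> bool" where
  "central_projection invl e \<longleftrightarrow> projection invl e \<and> (\<forall>a. e * a = a * e)"

definition rann :: "'a::ring_1 set \<Rightarrow> 'a set" where
  "rann S = {a. \<forall>s\<in>S. s * a = 0}"

definition rprinc :: "'a::ring_1 \<Rightarrow> 'a set" where
  "rprinc x = {x * r | r. True}"

text \<open>Product AB of two subsets: all finite sums of products a*b.\<close>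
inductive_set set_prod :: "'a::ring_1 set \<Rightarrow> 'a set \<Rightarrow> 'a set" for A B where
  zero: "0 \<in> set_prod A B"
| step: "s \<in> set_prod A B \<Longrightarrow> a \<in> A \<Longrightarrow> b \<in> B \<Longrightarrow> a * b + s \<in> set_prod A B"

text \<open>Power I^n of a subset (meaningful for n \<ge> 1; I^0 = R by convention).\<close>
fun set_pow :: "'a::ring_1 set \<Rightarrow> nat \<Rightarrow> 'a set" where
  "set_pow I 0 = UNIV"
| "set_pow I (Suc 0) = I"
| "set_pow I (Suc (Suc n)) = set_prod (set_pow I (Suc n)) I"

definition gen_pq_baer :: "('a::ring_1 \<Rightarrow> 'a) \<Rightarrow> bool" where
  "gen_pq_baer invl \<longleftrightarrow> star_ring invl \<and>
     (\<forall>x. \<exists>n e. n \<ge> 1 \<and> projection invl e \<and> rann (set_pow (rprinc x) n) = rprinc e)"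

end

theory Submission
  imports Defs
begin

text \<open>Let r((xR)^m) = fR with f a projection. Since (xR)^m is a right ideal, its right
  annihilator fR is also a left ideal, so r f = f r f for all r; applying the involution gives
  f r = f r f, hence f is central. Then e = 1 - f works: x^m f = 0, and (xR)^m y = 0 means
  y \<in> fR, i.e. e y = 0.\<close>

lemma star_ring_one:
  assumes "star_ring invl"
  shows "invl 1 = 1"
proof -
  have "invl (invl 1 * 1) = invl 1 * invl (invl 1)"
    using assms by (simp only: star_ring_def)
  then show ?thesis
    using assms by (simp add: star_ring_def)
qed

lemma star_ring_diff:
  assumes "star_ring invl"
  shows "invl (a - b) = invl a - invl b"
proof -
  have "invl (a - b) + invl b = invl a"
    using assms by (metis diff_add_cancel star_ring_def)
  then show ?thesis by (simp add: eq_diff_eq)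
qed

lemma projection_idem: "projection invl e \<Longrightarrow> e * e = e"
  unfolding projection_def by (elim conjE) (rule sym)

lemma projection_star_eq: "projection invl e \<Longrightarrow> invl e = e"
  unfolding projection_def by (elim conjE) (rule sym)

lemma set_prod_mult_right_closed:
  assumes "\<And>b r. b \<in> B \<Longrightarrow> b * r \<in> B" and "s \<in> set_prod A B"
  shows "s * r \<in> set_prod A B"
  using assms(2)
proof induction
  case zero
  then show ?case by (simp add: set_prod.zero)
next
  case (step s a b)
  have "(a * b + s) * r = a * (b * r) + s * r"
    by (simp add: algebra_simps)
  then show ?case
    using step assms(1) set_prod.step by metis
qed

lemma rprinc_mult_right_closed: "b \<in> rprinc x \<Longrightarrow> b * r \<in> rprinc x"
  by (auto simp: rprinc_def mult.assoc)

lemma set_pow_rprinc_mult_right_closed: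
  "s \<in> set_pow (rprinc x) (Suc n) \<Longrightarrow> s * r \<in> set_pow (rprinc x) (Suc n)"
proof (induction n arbitrary: s)
  case 0
  then show ?case by (simp add: rprinc_mult_right_closed)
next
  case (Suc n)
  then show ?case
    using set_prod_mult_right_closed[OF rprinc_mult_right_closed] by simp
qed

lemma self_in_rprinc: "x \<in> rprinc x"
  by (auto simp: rprinc_def intro: exI[of _ 1])

lemma power_in_set_pow_rprinc: "x ^ Suc n \<in> set_pow (rprinc x) (Suc n)"
proof (induction n)
  case 0
  then show ?case by (simp add: self_in_rprinc)
next
  case (Suc n)
  then have "x ^ Suc n * x + 0 \<in> set_prod (set_pow (rprinc x) (Suc n)) (rprinc x)"
    using self_in_rprinc set_prod.step set_prod.zero by blast
  then show ?case
    by (simp only: power_Suc2[of x "Suc n"] add_0_right set_pow.simps)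
qed

lemma rann_mult_left_closed:
  assumes "\<And>s r. s \<in> S \<Longrightarrow> s * r \<in> S" and "a \<in> rann S"
  shows "r * a \<in> rann S"
  using assms by (auto simp: rann_def mult.assoc[symmetric])

lemma rprinc_idem_iff:
  assumes "f * f = f"
  shows "y \<in> rprinc f \<longleftrightarrow> f * y = y"
  using assms by (auto simp: rprinc_def mult.assoc[symmetric] intro: exI[of _ y])

lemma image_mult_right_eq_zero_iff_rann:
  assumes "S \<noteq> {}"
  shows "(\<lambda>s. s * y) ` S = {0} \<longleftrightarrow> y \<in> rann S"
  using assms by (auto simp: rann_def)

lemma projection_central_if_left_ideal:
  assumes "star_ring invl" and "projection invl f"
    and left_ideal: "\<And>r. r * f \<in> rprinc f"
  shows "f * r = r * f"
proof -
  have ff: "f * f = f" and fs: "invl f = f"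
    using projection_idem projection_star_eq assms(2) by blast+
  have mul: "\<And>a b. invl (a * b) = invl b * invl a" and inv: "\<And>a. invl (invl a) = a"
    using assms(1) by (auto simp: star_ring_def)
  have rf: "r * f = f * r * f" for r
    using left_ideal[of r] rprinc_idem_iff[OF ff] by (simp add: mult.assoc)
  have "f * r = invl (invl r * f)"
    using mul inv fs by simp
  also have "\<dots> = invl (f * invl r * f)"
    by (simp only: rf[of "invl r", symmetric])
  also have "\<dots> = f * r * f"
    using mul inv fs by (simp add: mult.assoc)
  finally show ?thesis
    by (rule trans[OF _ rf[symmetric]])
qed

lemma central_projection_one_minus:
  assumes "star_ring invl" and "projection invl f" and central: "\<And>r. f * r = r * f"
  shows "central_projection invl (1 - f)"
proof -
  have "invl f = f" and ff: "f * f = f"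
    using projection_idem projection_star_eq assms(2) by blast+
  then have "1 - f = invl (1 - f)"
    using star_ring_diff[OF assms(1)] star_ring_one[OF assms(1)] by simp
  moreover have "1 - f = (1 - f) * (1 - f)"
    using ff by (simp add: algebra_simps)
  moreover have "(1 - f) * r = r * (1 - f)" for r
    using central[of r] by (simp add: left_diff_distrib right_diff_distrib)
  ultimately show ?thesis
    unfolding central_projection_def projection_def by blast
qed

theorem mainTheorem4:
  fixes invl :: "'a::ring_1 \<Rightarrow> 'a" and x :: 'a
  assumes "gen_pq_baer invl"
  shows "\<exists>e n. central_projection invl e \<and> n \<ge> 1 \<and> x ^ n * e = x ^ n \<and>
           (\<forall>y. (\<lambda>s. s * y) ` set_pow (rprinc x) n = {0} \<longleftrightarrow> e * y = 0)"
proof -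
  have star: "star_ring invl"
    using assms by (simp add: gen_pq_baer_def)
  obtain k f where pf: "projection invl f"
    and ann: "rann (set_pow (rprinc x) (Suc k)) = rprinc f"
    using assms unfolding gen_pq_baer_def by (metis not0_implies_Suc not_one_le_zero)
  let ?P = "set_pow (rprinc x) (Suc k)"
  have ff: "f * f = f"
    using pf by (rule projection_idem)
  have f_ann: "f \<in> rann ?P"
    using ann rprinc_idem_iff[OF ff] ff by simp
  have "r * f \<in> rprinc f" for r
    using rann_mult_left_closed[OF set_pow_rprinc_mult_right_closed f_ann] ann by simp
  then have central: "central_projection invl (1 - f)"
    using central_projection_one_minus[OF star pf] projection_central_if_left_ideal[OF star pf]
    by blast
  have "x ^ Suc k * f = 0"
    using f_ann power_in_set_pow_rprinc by (auto simp: rann_def)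
  then have "x ^ Suc k * (1 - f) = x ^ Suc k"
    by (simp add: algebra_simps)
  moreover have "(\<lambda>s. s * y) ` ?P = {0} \<longleftrightarrow> (1 - f) * y = 0" for y
  proof -
    have "?P \<noteq> {}"
      using power_in_set_pow_rprinc by blast
    then have "(\<lambda>s. s * y) ` ?P = {0} \<longleftrightarrow> y \<in> rprinc f"
      unfolding ann[symmetric] by (rule image_mult_right_eq_zero_iff_rann)
    also have "\<dots> \<longleftrightarrow> f * y = y"
      by (rule rprinc_idem_iff[OF ff])
    also have "\<dots> \<longleftrightarrow> (1 - f) * y = 0"
      by (simp add: left_diff_distrib eq_commute[of y])
    finally show ?thesis .
  qed
  moreover have "1 \<le> Suc k"
    by simp
  ultimately show ?thesis
    using central by (intro exI[of _ "1 - f"] exI[of _ "Suc k"] conjI allI) assumption+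
qed

end
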